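(* Let $h\ge1$ be an integer, and assume there is a positive integer $v$ with $2^hk\mid p^v+1$. Let $v'$ be the smallest positive integer with $k\mid p^{v'}+1$; then $m=2v'w'$ for some positive integer $w'$. The following hold. (a) If $p\equiv1\pmod4$, then $(1+X+\cdots+X^{k-1})^{2^h}$ divides $S(X)$ in $\mathbb{F}_2[X]$ if and only if $w'$ is even. (b) If $p\equiv3\pmod4$, then $(1+X+\cdots+X^{k-1})^{2^h}$ divides $S(X)$ in $\mathbb{F}_2[X]$ if and only if $w'$ is even or $v'w'$ is odd.
   Context: Let $p$ be an odd prime, $m\ge1$, $q=p^m$, $\alpha$ a primitive element of $\mathbb{F}_q$, and $T=q-1$. The binary SLCE sequence $(s_n)_{n\ge0}$ is defined as follows: $s_n=1$ if $\alpha^n+1$ is a nonzero non-square of $\mathbb{F}_q$ (i.e. $\alpha^n+1\in\alpha\langle\alpha^2\rangle$), and $s_n=0$ otherwise. Put $S(X)=\sum_{n=0}^{T-1}s_nX^n\in\mathbb{F}_2[X]$. Let $k>1$ be an odd divisor of $T$. *)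

theory Defs
  imports "HOL-Computational_Algebra.Polynomial" "HOL-Library.Z2"
    "HOL-Computational_Algebra.Primes"
begin

definition primitive_element :: "'a::{field,finite} \<Rightarrow> bool" where
  "primitive_element \<alpha> \<longleftrightarrow> (\<forall>x. x \<noteq> 0 \<longrightarrow> (\<exists>n::nat. \<alpha> ^ n = x))"

definition nonzero_nonsquare :: "'a::field \<Rightarrow> bool" where
  "nonzero_nonsquare x \<longleftrightarrow> x \<noteq> 0 \<and> \<not> (\<exists>y. y ^ 2 = x)"

definition slce :: "'a::{field,finite} \<Rightarrow> nat \<Rightarrow> bit" where
  "slce \<alpha> n = (if nonzero_nonsquare (\<alpha> ^ n + 1) then 1 else 0)"

definition slce_poly :: "'a::{field,finite} \<Rightarrow> bit poly" where
  "slce_poly \<alpha> = (\<Sum>n < card (UNIV :: 'a set) - 1. monom (slce \<alpha> n) n)"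

definition geom_poly :: "nat \<Rightarrow> bit poly" where
  "geom_poly k = (\<Sum>i < k. monom 1 i)"

end

theory Submission
  imports Defs "HOL-Number_Theory.Cong"
begin

text \<open>Write \<open>p\<^sup>m = Q\<^sup>2\<close> with \<open>Q = p\<^bsup>v' w'\<^esup>\<close> and \<open>N = 2\<^sup>h k\<close>; then \<open>N\<close> divides \<open>Q - 1\<close> when \<open>w'\<close> is
  even and \<open>Q + 1\<close> when \<open>w'\<close> is odd.  Over \<open>GF(2)\<close>, \<open>(1 + X + \<dots> + X\<^bsup>k-1\<^esup>)\<^bsup>2\<^sup>h\<^esup>\<close> is
  \<open>\<Sum>\<^sub>i<\<^sub>k X\<^bsup>2\<^sup>h i\<^esup>\<close>, a divisor of \<open>X\<^sup>N - 1\<close>, so only \<open>S\<close> reduced modulo \<open>X\<^sup>N - 1\<close> matters: its coefficients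
  are the parities \<open>c\<^sub>j\<close> of the number of \<open>n\<close> with \<open>s\<^sub>n = 1\<close> in each residue class \<open>j\<close> modulo \<open>N\<close>.  These
  parities are computed with involutions on exponents of the primitive element.  If \<open>N | Q - 1\<close>, the
  Frobenius \<open>n \<mapsto> Q n\<close> preserves every class and has no fixed point with \<open>s\<^sub>n = 1\<close>, so every \<open>c\<^sub>j\<close> is
  even and the divisibility holds.  If \<open>N | Q + 1\<close>, the map \<open>n \<mapsto> -Q n\<close> preserves the classes, swaps
  \<open>s\<^sub>n = 0\<close> and \<open>s\<^sub>n = 1\<close> on odd classes, making \<open>c\<^sub>j\<close> constant on odd \<open>j\<close>, and has explicitly countable
  fixed points on even classes: these come in pairs if \<open>4 | Q + 1\<close>, whereas if \<open>Q \<equiv> 1 (mod 4)\<close> then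
  \<open>h = 1\<close> and \<open>c\<^sub>0 \<noteq> c\<^sub>2\<close>, which rules the divisibility out.  Finally \<open>Q \<equiv> 3 (mod 4)\<close> exactly when
  \<open>p \<equiv> 3 (mod 4)\<close> and \<open>v' w'\<close> is odd.\<close>

section \<open>Involutions and residue classes\<close>

lemma even_card_iff_even_card_fixpoints:
  assumes "finite A" and "\<And>x. x \<in> A \<Longrightarrow> f x \<in> A" and "\<And>x. x \<in> A \<Longrightarrow> f (f x) = x"
  shows "even (card A) \<longleftrightarrow> even (card {x\<in>A. f x = x})"
  using assms
proof (induction "card A" arbitrary: A rule: less_induct)
  case less
  show ?case
  proof (cases "\<exists>x\<in>A. f x \<noteq> x")
    case False
    then have "{x\<in>A. f x = x} = A" by auto
    then show ?thesis by simp
  next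
    case True
    then obtain x where x: "x \<in> A" "f x \<noteq> x" by blast
    define A' where "A' = A - {x, f x}"
    have fx: "f x \<in> A" using less x by auto
    have "card {x, f x} \<le> card A" using less(2) x fx by (intro card_mono) auto
    then have "card A = card A' + 2"
      using less(2) x fx unfolding A'_def by (subst card_Diff_subset) auto
    moreover have "even (card A') \<longleftrightarrow> even (card {y\<in>A'. f y = y})"
    proof (rule less(1))
      show "card A' < card A" using \<open>card A = card A' + 2\<close> by simp
      show "finite A'" using less(2) by (simp add: A'_def)
      fix y assume y: "y \<in> A'"
      show "f (f y) = y" using y less(4) by (auto simp: A'_def)
      have "y \<in> A" "y \<noteq> x" "y \<noteq> f x" using y by (auto simp: A'_def)
      then show "f y \<in> A'" using less(3,4) x(1) unfolding A'_def by (metis Diff_iff insertE singletonD)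
    qed
    moreover have "{y\<in>A'. f y = y} = {y\<in>A. f y = y}"
      using x less(4) unfolding A'_def by auto
    ultimately show ?thesis by simp
  qed
qed

lemma even_card_if_involution_without_fixpoints:
  assumes "finite A" and "\<And>x. x \<in> A \<Longrightarrow> f x \<in> A" and "\<And>x. x \<in> A \<Longrightarrow> f (f x) = x"
    and "\<And>x. x \<in> A \<Longrightarrow> f x \<noteq> x"
  shows "even (card A)"
proof -
  have "{x\<in>A. f x = x} = {}" using assms(4) by auto
  then have "card {x\<in>A. f x = x} = 0" by (simp only: card.empty)
  then show ?thesis using even_card_iff_even_card_fixpoints[of A f] assms(1-3) by (metis even_zero)
qed

lemma inj_on_add_mod: "S \<subseteq> {..<(D::nat)} \<Longrightarrow> inj_on (\<lambda>t. (t + c) mod D) S"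
proof (rule inj_onI)
  fix a b assume "S \<subseteq> {..<D}" "a \<in> S" "b \<in> S" "(a + c) mod D = (b + c) mod D"
  then have "[a = b] (mod D)" "a < D" "b < D" by (auto simp: cong_def[symmetric] cong_add_rcancel_nat)
  then show "a = b" by (rule cong_less_modulus_unique_nat)
qed

text \<open>For \<open>D = Q + 1\<close>, \<open>t \<mapsto> (Q - 1) t\<close> maps this set onto the fixed points, in the residue
  class of \<open>j\<close> modulo \<open>N\<close>, of \<open>n \<mapsto> -Q n\<close> on the support of the sequence: \<open>t \<noteq> D div 2\<close>
  excludes \<open>\<alpha>\<^sup>n = -1\<close>, and \<open>odd t\<close> says that \<open>\<alpha>\<^sup>n + 1\<close> is a non-square.\<close>
definition twisted_fixpoints :: "nat \<Rightarrow> nat \<Rightarrow> nat \<Rightarrow> nat set" where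
  "twisted_fixpoints D N j = {t. t < D \<and> N dvd 2 * t + j \<and> t \<noteq> D div 2 \<and> odd t}"

lemma even_card_twisted_fixpoints:
  assumes "4 dvd D" and "N dvd D"
  shows "even (card (twisted_fixpoints D N j))"
proof -
  define H where "H = D div 2"
  have DH: "D = 2 * H" and "even H" using assms(1) unfolding H_def by auto
  define \<phi> where "\<phi> t = (t + H) mod D" for t
  show ?thesis
  proof (rule even_card_if_involution_without_fixpoints[where f = \<phi>])
    show "finite (twisted_fixpoints D N j)" unfolding twisted_fixpoints_def by auto
  next
    fix t assume t: "t \<in> twisted_fixpoints D N j"
    then have t1: "t < D" "N dvd 2 * t + j" "t \<noteq> H" "odd t"
      by (auto simp: twisted_fixpoints_def H_def)
    have "\<phi> (\<phi> t) = (t + H + H) mod D" unfolding \<phi>_def by (simp add: mod_add_left_eq)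
    also have "t + H + H = t + D" using DH by simp
    finally show "\<phi> (\<phi> t) = t" using t1(1) by simp
    show "\<phi> t \<noteq> t"
    proof
      assume "\<phi> t = t"
      then have "[t + H = t + 0] (mod D)" using t1(1) by (simp add: \<phi>_def cong_def)
      then have "[H = 0] (mod D)" by (simp only: cong_add_lcancel_nat)
      then show False using t1(1) DH by (simp add: cong_def)
    qed
    have "[(t + H) mod D = t + H] (mod N)" using assms(2) by (simp add: cong_def mod_mod_cancel)
    then have "[2 * \<phi> t + j = 2 * (t + H) + j] (mod N)"
      unfolding \<phi>_def by (intro cong_add cong_mult cong_refl)
    also have "2 * (t + H) + j = (2 * t + j) + D" using DH by simp
    also have "[(2 * t + j) + D = 0] (mod N)"
      using t1(2) assms(2) by (simp add: cong_0_iff)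
    finally have "N dvd 2 * \<phi> t + j" by (simp add: cong_0_iff)
    moreover have "\<phi> t < D" "odd (\<phi> t)" unfolding \<phi>_def using t1 DH \<open>even H\<close>
      by (auto simp: dvd_mod_iff)
    moreover have "\<phi> t \<noteq> H"
    proof
      assume "\<phi> t = H"
      then have "\<phi> (\<phi> t) = 0" unfolding \<phi>_def DH by (simp flip: mult_2)
      then show False using \<open>\<phi> (\<phi> t) = t\<close> t1(4) by simp
    qed
    ultimately show "\<phi> t \<in> twisted_fixpoints D N j" unfolding twisted_fixpoints_def H_def by simp
  qed
qed

lemma card_odd_multiples_eq_card_even_multiples:
  fixes D H k :: nat
  assumes "D = 2 * H" and "odd H" and "k dvd H"
  shows "card {t. t < D \<and> k dvd t \<and> odd t} = card {t. t < D \<and> k dvd t \<and> even t}"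
proof (rule card_bij_eq[where f = "\<lambda>t. (t + H) mod D" and g = "\<lambda>t. (t + H) mod D"])
  have "H < D" using assms(1,2) by (cases H) auto
  have "k dvd D" using assms(1,3) by simp
  show "inj_on (\<lambda>t. (t + H) mod D) {t. t < D \<and> k dvd t \<and> odd t}"
    "inj_on (\<lambda>t. (t + H) mod D) {t. t < D \<and> k dvd t \<and> even t}"
    by (rule inj_on_add_mod, auto)+
  show "(\<lambda>t. (t + H) mod D) ` {t. t < D \<and> k dvd t \<and> odd t} \<subseteq> {t. t < D \<and> k dvd t \<and> even t}"
    "(\<lambda>t. (t + H) mod D) ` {t. t < D \<and> k dvd t \<and> even t} \<subseteq> {t. t < D \<and> k dvd t \<and> odd t}"
    using \<open>H < D\<close> \<open>k dvd D\<close> assms by (auto simp: dvd_mod_iff)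
qed auto

lemma card_odd_pred_multiples_eq_card_even_multiples:
  fixes D k :: nat
  assumes "even D" and "D > 0" and "k dvd D"
  shows "card {t. t < D \<and> k dvd t + 1 \<and> odd t} = card {t. t < D \<and> k dvd t \<and> even t}"
proof (rule card_bij_eq[where f = "\<lambda>t. (t + 1) mod D" and g = "\<lambda>t. (t + (D - 1)) mod D"])
  show "inj_on (\<lambda>t. (t + 1) mod D) {t. t < D \<and> k dvd t + 1 \<and> odd t}"
    "inj_on (\<lambda>t. (t + (D - 1)) mod D) {t. t < D \<and> k dvd t \<and> even t}"
    by (rule inj_on_add_mod, auto)+
  show "(\<lambda>t. (t + 1) mod D) ` {t. t < D \<and> k dvd t + 1 \<and> odd t} \<subseteq> {t. t < D \<and> k dvd t \<and> even t}"
    using assms by (auto simp: dvd_mod_iff)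
  show "(\<lambda>t. (t + (D - 1)) mod D) ` {t. t < D \<and> k dvd t \<and> even t} \<subseteq> {t. t < D \<and> k dvd t + 1 \<and> odd t}"
  proof
    fix s assume "s \<in> (\<lambda>t. (t + (D - 1)) mod D) ` {t. t < D \<and> k dvd t \<and> even t}"
    then obtain t where t: "t < D" "k dvd t" "even t" "s = (t + (D - 1)) mod D" by blast
    have "[s + 1 = (t + (D - 1)) + 1] (mod k)"
      using assms(3) unfolding t(4) by (intro cong_add cong_refl) (simp add: cong_def mod_mod_cancel)
    also have "(t + (D - 1)) + 1 = t + D" using assms(2) by simp
    finally have "k dvd s + 1" using t(2) assms(3) by (simp add: cong_dvd_iff)
    moreover have "s < D" "odd s" using t assms(1,2) by (auto simp: dvd_mod_iff)
    ultimately show "s \<in> {t. t < D \<and> k dvd t + 1 \<and> odd t}" by simp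
  qed
qed auto

lemma twisted_fixpoints_0_2_parity:
  assumes "D mod 4 = 2" and "2 * k dvd D" and "odd k" and "k > 1"
  shows "even (card (twisted_fixpoints D (2 * k) 0)) \<longleftrightarrow> odd (card (twisted_fixpoints D (2 * k) 2))"
proof -
  define H where "H = D div 2"
  have DH: "D = 2 * H" and "odd H" using assms(1) unfolding H_def by presburger+
  have "H < D" "even D" "D > 0" using DH \<open>odd H\<close> by (cases H; auto)+
  have "k dvd D" "k dvd H" using assms(2) DH by (auto intro: dvd_mult_right)
  define O0 where "O0 = {t. t < D \<and> k dvd t \<and> odd t}"
  have "finite O0" "H \<in> O0" unfolding O0_def using \<open>H < D\<close> \<open>k dvd H\<close> \<open>odd H\<close> by auto
  have "twisted_fixpoints D (2 * k) 0 = O0 - {H}"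
    unfolding twisted_fixpoints_def O0_def H_def by auto
  then have "card (twisted_fixpoints D (2 * k) 0) + 1 = card O0"
    using card_Suc_Diff1[OF \<open>finite O0\<close> \<open>H \<in> O0\<close>] by simp
  moreover have "twisted_fixpoints D (2 * k) 2 = {t. t < D \<and> k dvd t + 1 \<and> odd t}"
  proof -
    have "2 * k dvd 2 * t + 2 \<longleftrightarrow> k dvd t + 1" for t :: nat
      using dvd_times_left_cancel_iff[of 2 k "t + 1"] by simp
    moreover have "t \<noteq> H" if "k dvd t + 1" for t
    proof
      assume "t = H"
      then have "k dvd 1" using that \<open>k dvd H\<close> by (metis dvd_add_right_iff)
      then show False using assms(4) by simp
    qed
    ultimately show ?thesis unfolding twisted_fixpoints_def H_def by blast
  qed
  ultimately have "card (twisted_fixpoints D (2 * k) 0) + 1 = card (twisted_fixpoints D (2 * k) 2)"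
    using card_odd_multiples_eq_card_even_multiples[OF DH \<open>odd H\<close> \<open>k dvd H\<close>]
      card_odd_pred_multiples_eq_card_even_multiples[OF \<open>even D\<close> \<open>D > 0\<close> \<open>k dvd D\<close>]
    unfolding O0_def by simp
  then show ?thesis by (metis even_plus_one_iff)
qed

section \<open>The exponent of \<open>-1\<close>\<close>

lemma even_power_plus_one_mod_4:
  assumes "odd (p::nat)" and "even v"
  shows "(p ^ v + 1) mod 4 = 2"
proof -
  obtain b where "v = 2 * b" using assms(2) by blast
  moreover obtain a where "p ^ b = 2 * a + 1" using assms(1) by (metis even_power oddE)
  ultimately have "p ^ v + 1 = (2 * a + 1) ^ 2 + 1" by (metis power_mult mult.commute)
  also have "\<dots> = 4 * (a * a + a) + 2" by (simp add: power2_eq_square algebra_simps)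
  finally have "p ^ v + 1 = 4 * (a * a + a) + 2" .
  then show ?thesis by presburger
qed

lemma odd_exponent_if_four_dvd_power_plus_one:
  assumes "odd (p::nat)" and "4 dvd p ^ v + 1"
  shows "odd v"
  using assms even_power_plus_one_mod_4[of p v] by auto

lemma int_plus_one_dvd_power_plus_one: "odd n \<Longrightarrow> (a + 1) dvd (a ^ n + (1::int))"
  using one_diff_power_eq[of "- a" n] by (simp add: add.commute)

lemma two_power_dvd_base_plus_one:
  assumes "odd (p::nat)" and "h \<ge> 1" and "2 ^ h dvd p ^ v + 1"
  shows "2 ^ h dvd p + 1"
proof (cases "h = 1")
  case True
  then show ?thesis using assms(1) by simp
next
  case False
  then have "4 dvd p ^ v + 1"
    using assms(2,3) le_imp_power_dvd[of 2 h 2] by (auto intro: dvd_trans)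
  then have "odd v" using assms(1) odd_exponent_if_four_dvd_power_plus_one by blast
  define R where "R = (\<Sum>i<v. (- int p) ^ i)"
  text \<open>The cofactor \<open>R\<close> of \<open>p + 1\<close> in \<open>p\<^sup>v + 1\<close> is a sum of \<open>v\<close> odd terms, hence odd.\<close>
  have "int (p ^ v + 1) = int (p + 1) * R"
    using one_diff_power_eq[of "- int p" v] \<open>odd v\<close> unfolding R_def by simp
  moreover have "odd R"
  proof -
    have "odd (\<Sum>i<n. (- int p) ^ i) \<longleftrightarrow> odd n" for n
      using assms(1) by (induction n) auto
    then show ?thesis using \<open>odd v\<close> unfolding R_def by blast
  qed
  moreover have "int (2 ^ h) dvd int (p ^ v + 1)" using assms(3) by (simp only: int_dvd_int_iff)
  ultimately have "int (2 ^ h) dvd int (p + 1)"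
    by (simp add: coprime_dvd_mult_left_iff)
  then show ?thesis by (simp only: int_dvd_int_iff)
qed

lemma power_mod_4_eq_3_iff:
  assumes "odd (p::nat)"
  shows "p ^ n mod 4 = 3 \<longleftrightarrow> p mod 4 = 3 \<and> odd n"
proof (induction n)
  case (Suc n)
  have "p ^ Suc n mod 4 = (p mod 4) * (p ^ n mod 4) mod 4" by (simp add: mod_mult_eq)
  moreover have "p mod 4 = 1 \<or> p mod 4 = 3" using assms by presburger
  moreover have "odd (p ^ n)" using assms by simp
  then have "p ^ n mod 4 = 1 \<or> p ^ n mod 4 = 3" by presburger
  ultimately show ?case using Suc by auto
qed simp

text \<open>The powers of \<open>p\<close> modulo \<open>k\<close> have period \<open>2 u\<close>, and \<open>p\<^sup>e \<equiv> \<plusminus>1\<close> only for \<open>e \<equiv> 0, u (mod 2 u)\<close>.\<close>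
locale least_neg_one_exponent =
  fixes p k u :: nat
  assumes k_gt_2: "k > 2" and u_pos: "u > 0" and dvd_u: "k dvd p ^ u + 1"
    and u_least: "\<And>s. 0 < s \<Longrightarrow> s < u \<Longrightarrow> \<not> k dvd p ^ s + 1"
begin

lemma dvd_power_plus_one_iff_cong: "k dvd p ^ s + 1 \<longleftrightarrow> [int p ^ s = -1] (mod int k)"
  by (simp add: cong_iff_dvd_diff add.commute flip: int_dvd_int_iff)

lemma power_u_cong: "[int p ^ u = -1] (mod int k)"
  using dvd_u dvd_power_plus_one_iff_cong by blast

lemma one_not_cong_minus_one: "\<not> [1 = -1] (mod int k)"
proof
  assume "[1 = -1] (mod int k)"
  then have "k dvd 2" by (simp add: cong_iff_dvd_diff flip: int_dvd_int_iff)
  then show False using k_gt_2 by (auto dest: dvd_imp_le)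
qed

lemma power_cong_mod_2u: "[int p ^ e = int p ^ (e mod (2 * u))] (mod int k)"
proof -
  have "[(int p ^ u) ^ (2 * (e div (2 * u))) = (-1) ^ (2 * (e div (2 * u)))] (mod int k)"
    using power_u_cong by (rule cong_pow)
  then have "[int p ^ (2 * u * (e div (2 * u))) = 1] (mod int k)"
    by (simp add: power_mult[symmetric] ac_simps)
  then have "[int p ^ (2 * u * (e div (2 * u))) * int p ^ (e mod (2 * u))
      = 1 * int p ^ (e mod (2 * u))] (mod int k)"
    by (intro cong_mult cong_refl)
  then show ?thesis by (simp flip: power_add)
qed

lemma power_not_cong_pm_one_below_u:
  assumes "0 < s" and "s < u"
  shows "\<not> [int p ^ s = 1] (mod int k)" and "\<not> [int p ^ s = -1] (mod int k)"
proof -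
  show "\<not> [int p ^ s = -1] (mod int k)" using u_least[OF assms] dvd_power_plus_one_iff_cong by blast
  show "\<not> [int p ^ s = 1] (mod int k)"
  proof
    assume "[int p ^ s = 1] (mod int k)"
    then have "[int p ^ s * int p ^ (u - s) = 1 * int p ^ (u - s)] (mod int k)"
      by (intro cong_mult cong_refl)
    then have "[int p ^ (u - s) = int p ^ u] (mod int k)"
      using assms by (simp add: cong_sym flip: power_add)
    then have "[int p ^ (u - s) = -1] (mod int k)" using power_u_cong by (rule cong_trans)
    then show False using u_least[of "u - s"] assms dvd_power_plus_one_iff_cong by simp
  qed
qed

lemma power_cong_pm_one_below_2u:
  assumes "r < 2 * u"
  shows "[int p ^ r = 1] (mod int k) \<Longrightarrow> r = 0" and "[int p ^ r = -1] (mod int k) \<Longrightarrow> r = u"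
proof -
  have shift: "[int p ^ r = - (int p ^ (r - u))] (mod int k)" if "u \<le> r"
  proof -
    have "[int p ^ u * int p ^ (r - u) = (-1) * int p ^ (r - u)] (mod int k)"
      using power_u_cong by (intro cong_mult cong_refl)
    then show ?thesis using that by (simp flip: power_add)
  qed
  have below: "r - u < u" using assms by simp
  show "r = 0" if "[int p ^ r = 1] (mod int k)"
  proof (cases "u \<le> r")
    case True
    then have "[- (int p ^ (r - u)) = - (-1)] (mod int k)"
      using shift that by (metis cong_sym cong_trans minus_minus)
    then have "[int p ^ (r - u) = -1] (mod int k)" by (simp only: cong_minus_minus_iff)
    moreover have "r \<noteq> u" using that power_u_cong one_not_cong_minus_one
      by (metis cong_sym cong_trans)
    ultimately show ?thesis using power_not_cong_pm_one_below_u(2)[of "r - u"] True below by simp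
  qed (use that power_not_cong_pm_one_below_u(1)[of r] in auto)
  show "r = u" if "[int p ^ r = -1] (mod int k)"
  proof (cases "u \<le> r")
    case True
    then have "[- (int p ^ (r - u)) = - 1] (mod int k)"
      using shift that by (metis cong_sym cong_trans)
    then have "[int p ^ (r - u) = 1] (mod int k)" by (simp only: cong_minus_minus_iff)
    then show ?thesis using power_not_cong_pm_one_below_u(1)[of "r - u"] True below
      by (cases "r - u = 0") auto
  next
    case False
    then show ?thesis using that power_not_cong_pm_one_below_u(2)[of r] one_not_cong_minus_one
      by (cases "r = 0") auto
  qed
qed

lemma two_u_dvd_if_power_cong_one:
  assumes "[int p ^ e = 1] (mod int k)"
  shows "2 * u dvd e"
proof -
  have "[int p ^ (e mod (2 * u)) = 1] (mod int k)"
    using power_cong_mod_2u[of e] assms by (metis cong_sym cong_trans)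
  then have "e mod (2 * u) = 0" using power_cong_pm_one_below_2u(1) u_pos by simp
  then show ?thesis by auto
qed

lemma odd_multiple_of_u_if_power_cong_minus_one:
  assumes "[int p ^ e = -1] (mod int k)"
  shows "\<exists>a. e = u * (2 * a + 1)"
proof -
  have "[int p ^ (e mod (2 * u)) = -1] (mod int k)"
    using power_cong_mod_2u[of e] assms by (metis cong_sym cong_trans)
  then have "e mod (2 * u) = u" using power_cong_pm_one_below_2u(2) u_pos by simp
  then have "e = u * (2 * (e div (2 * u)) + 1)"
    using div_mult_mod_eq[of e "2 * u"] by (simp add: algebra_simps)
  then show ?thesis by blast
qed

end

lemma least_neg_one_exponent_Least:
  assumes "odd k" and "k > 1" and "v > 0" and "k dvd p ^ v + 1"
  shows "least_neg_one_exponent p k (LEAST u. u > 0 \<and> k dvd p ^ u + 1)"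
proof
  show "(LEAST u. u > 0 \<and> k dvd p ^ u + 1) > 0" "k dvd p ^ (LEAST u. u > 0 \<and> k dvd p ^ u + 1) + 1"
    using LeastI[of "\<lambda>u. u > 0 \<and> k dvd p ^ u + 1" v] assms(3,4) by auto
  show "k > 2" using assms(1,2) by presburger
qed (use not_less_Least in blast)

context least_neg_one_exponent
begin

lemma dvd_power_even_multiple_minus_one:
  assumes "odd p" and "odd k" and "2 ^ h dvd p + 1"
  shows "2 ^ h * k dvd p ^ (u * (2 * b)) - 1"
proof -
  have "[(int p ^ u) ^ (2 * b) = (-1) ^ (2 * b)] (mod int k)" using power_u_cong by (rule cong_pow)
  then have "int k dvd int p ^ (u * (2 * b)) - 1"
    by (simp add: cong_iff_dvd_diff power_mult[symmetric])
  moreover have "int (2 ^ h) dvd int p ^ (u * (2 * b)) - 1"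
  proof -
    have "int (2 ^ h) dvd int p + 1" using assms(3) by (metis int_dvd_int_iff of_nat_1 of_nat_add)
    also have "int p + 1 dvd int p ^ 2 - 1"
    proof
      show "int p ^ 2 - 1 = (int p + 1) * (int p - 1)" by (simp add: power2_eq_square algebra_simps)
    qed
    also have "int p ^ 2 - 1 dvd (int p ^ 2) ^ (u * b) - 1" using power_diff_1_eq[of "int p ^ 2" "u * b"] by simp
    finally show ?thesis by (simp add: power_mult[symmetric] ac_simps)
  qed
  moreover have "coprime (int (2 ^ h)) (int k)" using assms(2) by simp
  ultimately have "int (2 ^ h) * int k dvd int p ^ (u * (2 * b)) - 1" by (simp add: divides_mult)
  moreover have "p ^ (u * (2 * b)) \<ge> 1" using assms(1) by (cases p) auto
  ultimately show ?thesis by (simp add: of_nat_diff flip: int_dvd_int_iff)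
qed

lemma dvd_power_odd_multiple_plus_one:
  assumes "odd k" and "odd w" and "2 ^ h dvd p ^ (u * w) + 1"
  shows "2 ^ h * k dvd p ^ (u * w) + 1"
proof -
  have "[(int p ^ u) ^ w = (-1) ^ w] (mod int k)" using power_u_cong by (rule cong_pow)
  then have "int k dvd int p ^ (u * w) + 1"
    using assms(2) by (simp add: cong_iff_dvd_diff power_mult)
  then have "k dvd p ^ (u * w) + 1" by (simp add: add.commute flip: int_dvd_int_iff)
  moreover have "coprime (2 ^ h) k" using assms(1) by simp
  ultimately show ?thesis using assms(3) by (simp add: divides_mult)
qed

end

lemma exponent_decomposition:
  fixes p m k h v :: nat
  assumes "odd p" and "m \<ge> 1" and "odd k" and "k > 1" and "k dvd p ^ m - 1" and "h \<ge> 1"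
    and "v > 0" and "2 ^ h * k dvd p ^ v + 1"
  defines "u \<equiv> LEAST v'. v' > 0 \<and> k dvd p ^ v' + 1"
  shows "\<exists>w>0. m = 2 * u * w \<and> (even w \<longrightarrow> 2 ^ h * k dvd p ^ (u * w) - 1)
            \<and> (odd w \<longrightarrow> 2 ^ h * k dvd p ^ (u * w) + 1)"
proof -
  have "k dvd p ^ v + 1" using assms(8) by (rule dvd_mult_right)
  interpret least_neg_one_exponent p k u
    unfolding u_def by (rule least_neg_one_exponent_Least[OF assms(3,4,7) \<open>k dvd p ^ v + 1\<close>])
  have "p ^ m \<ge> 1" using assms(1) by (cases p) auto
  have "int k dvd int (p ^ m - 1)" using assms(5) by (simp only: int_dvd_int_iff)
  then have "int k dvd int p ^ m - 1" using \<open>p ^ m \<ge> 1\<close> by (simp add: of_nat_diff)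
  then have "2 * u dvd m" by (intro two_u_dvd_if_power_cong_one) (simp add: cong_iff_dvd_diff)
  then obtain w where w: "m = 2 * u * w" by blast
  have "w > 0" using w assms(2) by (cases w) auto
  have "2 ^ h dvd p + 1" using two_power_dvd_base_plus_one[OF assms(1,6) dvd_mult_left[OF assms(8)]] .
  have "2 ^ h * k dvd p ^ (u * w) - 1" if "even w"
    using dvd_power_even_multiple_minus_one[OF assms(1,3) \<open>2 ^ h dvd p + 1\<close>] that by (auto elim!: evenE)
  moreover have "2 ^ h * k dvd p ^ (u * w) + 1" if "odd w"
  proof (rule dvd_power_odd_multiple_plus_one[OF assms(3) that])
    show "2 ^ h dvd p ^ (u * w) + 1"
    proof (cases "h = 1")
      case False
      then have "4 dvd p ^ v + 1"
        using assms(6) le_imp_power_dvd[of 2 h 2] dvd_mult_left[OF assms(8)] by (auto intro: dvd_trans)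
      then have "odd v" using assms(1) odd_exponent_if_four_dvd_power_plus_one by blast
      moreover obtain a where "v = u * (2 * a + 1)"
        using odd_multiple_of_u_if_power_cong_minus_one \<open>k dvd p ^ v + 1\<close> dvd_power_plus_one_iff_cong
        by blast
      ultimately have "odd (u * w)" using \<open>odd w\<close> by simp
      then have "int p + 1 dvd int p ^ (u * w) + 1" by (rule int_plus_one_dvd_power_plus_one)
      then have "p + 1 dvd p ^ (u * w) + 1" by (simp add: add.commute flip: int_dvd_int_iff)
      then show ?thesis using \<open>2 ^ h dvd p + 1\<close> by (rule dvd_trans[rotated])
    qed (use assms(1) in simp)
  qed
  ultimately show ?thesis using w \<open>w > 0\<close> by blast
qed

section \<open>Polynomials over \<open>GF(2)\<close>\<close>

lemma of_nat_bit: "(of_nat n :: bit) = of_bool (odd n)"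
  by (induction n) auto

lemma CHAR_bit: "CHAR(bit) = 2"
  by (rule CHAR_eqI) (auto simp: of_nat_bit)

lemma geom_poly_power_two_power: "geom_poly k ^ (2 ^ h) = (\<Sum>i<k. monom 1 (2 ^ h * i))"
proof -
  have "geom_poly k ^ (2 ^ h) = (\<Sum>i<k. monom (1::bit) i ^ (2 ^ h))"
    unfolding geom_poly_def by (rule freshmans_dream_sum') (simp_all add: CHAR_bit)
  then show ?thesis by (simp add: monom_power mult.commute)
qed

lemma geom_poly_power_dvd_monom_minus_one: "geom_poly k ^ (2 ^ h) dvd monom 1 (2 ^ h * k) - 1"
proof -
  have "monom (1::bit) (2 ^ h) ^ k - 1 = (monom 1 (2 ^ h) - 1) * (\<Sum>i<k. monom 1 (2 ^ h) ^ i)"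
    by (rule power_diff_1_eq)
  then show ?thesis by (simp add: geom_poly_power_two_power monom_power mult.commute)
qed

lemma coeff_geom_poly_power:
  "coeff (geom_poly k ^ (2 ^ h)) n = of_bool (2 ^ h dvd n \<and> n < 2 ^ h * k)"
proof -
  have "coeff (geom_poly k ^ (2 ^ h)) n = (\<Sum>i<k. of_bool (2 ^ h * i = n))"
    by (simp add: geom_poly_power_two_power coeff_sum coeff_monom of_bool_def)
  also have "\<dots> = of_nat (card {i\<in>{..<k}. 2 ^ h * i = n})" by (simp add: Int_def)
  also have "{i\<in>{..<k}. 2 ^ h * i = n} = (if 2 ^ h dvd n \<and> n < 2 ^ h * k then {n div 2 ^ h} else {})"
    by auto
  finally show ?thesis by simp
qed

lemma monom_minus_one_dvd_sum_minus_residue_sum: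
  fixes s :: "nat \<Rightarrow> 'a::comm_ring_1"
  assumes "N > 0"
  shows "monom 1 N - 1 dvd
           (\<Sum>n<T. monom (s n) n) - (\<Sum>j<N. monom (\<Sum>n | n < T \<and> n mod N = j. s n) j)"
proof -
  have "(\<Sum>j<N. monom (\<Sum>n | n < T \<and> n mod N = j. s n) j)
      = (\<Sum>j<N. \<Sum>n\<in>{n\<in>{..<T}. n mod N = j}. monom (s n) (n mod N))"
    by (intro sum.cong) (auto simp: monom_sum)
  also have "\<dots> = (\<Sum>n<T. monom (s n) (n mod N))"
    by (rule sum.group) (use assms in auto)
  finally have residue_sum: "(\<Sum>j<N. monom (\<Sum>n | n < T \<and> n mod N = j. s n) j)
      = (\<Sum>n<T. monom (s n) (n mod N))" .
  have "monom (s n) n = monom (s n) (n mod N) * monom 1 N ^ (n div N)" for n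
    by (simp add: mult_monom monom_power)
  then have "(\<Sum>n<T. monom (s n) n) - (\<Sum>n<T. monom (s n) (n mod N))
      = (\<Sum>n<T. monom (s n) (n mod N) * (monom 1 N ^ (n div N) - 1))"
    by (simp add: sum_subtractf right_diff_distrib)
  moreover have "monom 1 N - 1 dvd monom 1 N ^ (n div N) - (1 :: 'a poly)" for n
    using power_diff_1_eq[of "monom (1::'a) N" "n div N"] by simp
  ultimately show ?thesis unfolding residue_sum by (simp add: dvd_sum)
qed

lemma sum_power_mult_factor:
  fixes x :: "'a::idom"
  assumes "x \<noteq> 1"
  shows "(\<Sum>i<R * k. x ^ i) = (\<Sum>i<k. (x ^ R) ^ i) * (\<Sum>r<R. x ^ r)"
proof -
  have "(x - 1) * (\<Sum>i<R * k. x ^ i) = (x - 1) * ((\<Sum>i<k. (x ^ R) ^ i) * (\<Sum>r<R. x ^ r))"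
    using power_diff_1_eq[of x "R * k"] power_diff_1_eq[of x R] power_diff_1_eq[of "x ^ R" k]
    by (simp add: power_mult algebra_simps)
  then show ?thesis using assms by simp
qed

lemma sum_monom_alternating:
  "(\<Sum>j<2 * M. monom (if even j then a else b) j) = (monom a 0 + monom b 1) * (\<Sum>i<M. monom (1::'a::comm_ring_1) 2 ^ i)"
proof (induction M)
  case (Suc M)
  have "(\<Sum>j<2 * Suc M. monom (if even j then a else b) j) =
     (\<Sum>j<2 * M. monom (if even j then a else b) j) + monom a (2 * M) + monom b (Suc (2 * M))"
    by simp
  then show ?case using Suc by (simp add: algebra_simps mult_monom monom_power)
qed simp

lemma geom_poly_power_dvd_alternating_sum:
  assumes "h \<ge> 1" and "\<And>j. j < 2 ^ h * k \<Longrightarrow> c j = (if even j then a else b)"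
  shows "geom_poly k ^ (2 ^ h) dvd (\<Sum>j<2 ^ h * k. monom (c j) j)"
proof -
  define R :: nat where "R = 2 ^ (h - 1)"
  have hR: "2 ^ h = 2 * R" using assms(1) unfolding R_def by (simp flip: power_Suc)
  define x :: "bit poly" where "x = monom 1 2"
  have "x \<noteq> 1" unfolding x_def by (metis degree_1 degree_monom_eq one_neq_zero zero_neq_numeral)
  have "(\<Sum>j<2 ^ h * k. monom (c j) j) = (\<Sum>j<2 * (R * k). monom (if even j then a else b) j)"
    using assms(2) hR by (intro sum.cong) (auto simp: mult.assoc)
  also have "\<dots> = (monom a 0 + monom b 1) * (\<Sum>i<R * k. x ^ i)"
    unfolding x_def by (rule sum_monom_alternating)
  also have "(\<Sum>i<R * k. x ^ i) = (\<Sum>i<k. (x ^ R) ^ i) * (\<Sum>r<R. x ^ r)"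
    using \<open>x \<noteq> 1\<close> by (rule sum_power_mult_factor)
  also have "(\<Sum>i<k. (x ^ R) ^ i) = geom_poly k ^ (2 ^ h)"
    unfolding geom_poly_power_two_power x_def by (simp add: hR monom_power mult.commute)
  finally show ?thesis by simp
qed

text \<open>Comparing coefficients of \<open>X\<^sup>2\<close> in \<open>F (X\<^sup>2 - 1) = g (X\<^bsup>2k\<^esup> - 1)\<close>, where the quotient \<open>g\<close> has
  degree at most \<open>1\<close>.\<close>
lemma eq_0_2_if_geom_poly_square_dvd_sum_monom:
  assumes "k > 1" and "geom_poly k ^ 2 dvd (\<Sum>j<2 * k. monom (c j) j)"
  shows "c 0 = c 2"
proof -
  define F where "F = (\<Sum>j<2 * k. monom (c j) j)"
  have coeff_F: "coeff F n = (if n < 2 * k then c n else 0)" for n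
    by (simp add: F_def coeff_sum coeff_monom)
  have "degree F \<le> 2 * k - 1" by (rule degree_le) (auto simp: coeff_F)
  then have "degree F < 2 * k" using assms(1) by simp
  let ?G = "geom_poly k ^ 2"
  obtain g where g: "F = ?G * g" using assms(2) unfolding F_def by auto
  have coeff_G: "coeff ?G n = of_bool (even n \<and> n < 2 * k)" for n
    using coeff_geom_poly_power[of k 1 n] by simp
  have "coeff ?G (2 * k - 2) = 1" using assms(1) by (simp add: coeff_G)
  then have "?G \<noteq> 0" by auto
  have "degree ?G = 2 * k - 2"
  proof (rule antisym)
    show "degree ?G \<le> 2 * k - 2" by (rule degree_le) (auto simp: coeff_G)
    show "2 * k - 2 \<le> degree ?G" using \<open>coeff ?G (2 * k - 2) = 1\<close> by (intro le_degree) simp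
  qed
  have "coeff g 2 = 0"
  proof (cases "g = 0")
    case False
    then have "degree F = degree ?G + degree g" using g \<open>?G \<noteq> 0\<close> by (simp add: degree_mult_eq)
    then show ?thesis using assms(1) \<open>degree F < 2 * k\<close> \<open>degree ?G = 2 * k - 2\<close> by (intro coeff_eq_0) simp
  qed simp
  have "?G * (monom 1 2 - 1) = monom 1 (2 * k) - 1"
    using geom_poly_power_two_power[of k 1] power_diff_1_eq[of "monom (1::bit) 2" k]
    by (simp add: monom_power mult.commute)
  then have "F * (monom 1 2 - 1) = g * (monom 1 (2 * k) - 1)" using g by (simp add: ac_simps)
  then have "coeff (F * (monom 1 2 - 1)) 2 = coeff (g * (monom 1 (2 * k) - 1)) 2" by simp
  moreover have "coeff (F * (monom 1 2 - 1)) 2 = coeff F 0 - coeff F 2"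
  proof -
    have "F * (monom 1 2 - 1) = monom 1 2 * F - F" by (simp add: right_diff_distrib mult.commute)
    then show ?thesis by (simp only: coeff_diff) (simp add: coeff_monom_mult)
  qed
  moreover have "coeff (g * (monom 1 (2 * k) - 1)) 2 = 0"
  proof -
    have "g * (monom 1 (2 * k) - 1) = monom 1 (2 * k) * g - g" by (simp add: right_diff_distrib mult.commute)
    then show ?thesis using assms(1) \<open>coeff g 2 = 0\<close> by (simp only: coeff_diff) (simp add: coeff_monom_mult)
  qed
  ultimately have "coeff F 0 = coeff F 2" by (metis right_minus_eq)
  then show ?thesis using assms(1) by (simp add: coeff_F)
qed

section \<open>The finite field and the sequence\<close>

lemma power_card_minus_one_eq_one:
  fixes x :: "'a::{field,finite}"
  assumes "x \<noteq> 0"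
  shows "x ^ (card (UNIV :: 'a set) - 1) = 1"
proof -
  have "(\<Prod>y\<in>UNIV-{0}. x * y) = (\<Prod>y\<in>UNIV-{0::'a}. y)"
    by (rule prod.reindex_bij_witness[of _ "\<lambda>y. y / x" "\<lambda>y. x * y"]) (use assms in auto)
  moreover have "(\<Prod>y\<in>UNIV-{0}. x * y) = x ^ (card (UNIV :: 'a set) - 1) * (\<Prod>y\<in>UNIV-{0::'a}. y)"
    by (simp add: prod.distrib card_Diff_singleton)
  moreover have "(\<Prod>y\<in>UNIV-{0::'a}. y) \<noteq> 0" by simp
  ultimately show ?thesis by (metis mult_cancel_right1)
qed

lemma of_nat_card_UNIV_eq_0: "of_nat (card (UNIV :: 'a::{field,finite} set)) = (0::'a)"
proof -
  have "(\<Sum>y\<in>UNIV. 1 + y) = (\<Sum>y\<in>UNIV. y :: 'a)"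
    by (rule sum.reindex_bij_witness[of _ "\<lambda>y. y - 1" "\<lambda>y. 1 + y"]) auto
  then show ?thesis by (simp add: sum.distrib)
qed

locale slce_field =
  fixes \<alpha> :: "'a::{field,finite}" and p m :: nat
  assumes prime_p: "prime p" and odd_p: "odd p" and m_pos: "m \<ge> 1"
    and card_UNIV: "card (UNIV :: 'a set) = p ^ m"
    and primitive: "primitive_element \<alpha>"
begin

definition T :: nat where "T = p ^ m - 1"

lemma CHAR_eq: "CHAR('a) = p"
proof -
  have "prime CHAR('a)" by (rule prime_CHAR_semidom[OF finite_imp_CHAR_pos]) simp
  moreover have "of_nat (p ^ m) = (0::'a)" using of_nat_card_UNIV_eq_0[where 'a='a] card_UNIV by simp
  then have "CHAR('a) dvd p ^ m" by (simp only: of_nat_eq_0_iff_char_dvd)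
  ultimately show ?thesis using prime_p prime_dvd_power primes_dvd_imp_eq by blast
qed

lemma add_power_p_power: "(x + y :: 'a) ^ (p ^ e) = x ^ (p ^ e) + y ^ (p ^ e)"
  by (rule freshmans_dream') (auto simp: CHAR_eq prime_p)

lemma p_ge_3: "p \<ge> 3"
  using prime_p odd_p prime_ge_2_nat[OF prime_p] by (cases "p = 2") auto

lemma card_ge_3: "p ^ m \<ge> 3"
proof -
  have "p \<ge> 3" by (rule p_ge_3)
  moreover have "p ^ 1 \<le> p ^ m" using m_pos \<open>p \<ge> 3\<close> by (intro power_increasing) auto
  ultimately show ?thesis by simp
qed

lemma T_ge_2: "T \<ge> 2" using card_ge_3 by (simp add: T_def)

lemma even_T: "even T" using odd_p card_ge_3 by (simp add: T_def)

lemma power_T: "x \<noteq> 0 \<Longrightarrow> x ^ T = (1::'a)"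
  using power_card_minus_one_eq_one[of x] by (simp add: T_def card_UNIV)

lemma minus_one_neq_one: "(-1::'a) \<noteq> 1"
proof
  assume "(-1::'a) = 1"
  then have "(of_nat 2 :: 'a) = 0" by (metis add.right_inverse of_nat_numeral one_add_one)
  then have "p dvd 2" by (simp only: of_nat_eq_0_iff_char_dvd CHAR_eq)
  then have "p \<le> 2" by (rule dvd_imp_le) simp
  then show False using p_ge_3 by simp
qed

lemma alpha_nonzero: "\<alpha> \<noteq> 0"
proof
  assume "\<alpha> = 0"
  moreover have "(-1::'a) \<noteq> 0" by simp
  then obtain n where "\<alpha> ^ n = (-1::'a)" using primitive unfolding primitive_element_def by blast
  ultimately show False using minus_one_neq_one by (cases n) auto
qed

lemma alpha_power_mod_T: "\<alpha> ^ (n mod T) = \<alpha> ^ n"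
proof -
  have "\<alpha> ^ n = (\<alpha> ^ T) ^ (n div T) * \<alpha> ^ (n mod T)"
    by (simp flip: power_mult power_add)
  then show ?thesis using power_T[OF alpha_nonzero] by simp
qed

lemma alpha_power_mult_mod_T: "\<alpha> ^ ((n * e) mod T) = (\<alpha> ^ n) ^ e"
  by (simp add: alpha_power_mod_T power_mult)

lemma discrete_log: "x \<noteq> 0 \<Longrightarrow> \<exists>n<T. \<alpha> ^ n = x"
  using primitive T_ge_2 alpha_power_mod_T unfolding primitive_element_def
  by (metis mod_less_divisor not_numeral_le_zero not_gr_zero)

lemma alpha_power_eq_iff: "\<alpha> ^ a = \<alpha> ^ b \<longleftrightarrow> a mod T = b mod T"
proof
  have "(\<lambda>n. \<alpha> ^ n) ` {..<T} = UNIV - {0}"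
    using alpha_nonzero discrete_log by fastforce
  moreover have "card (UNIV - {0::'a}) = T" by (simp add: card_Diff_singleton card_UNIV T_def)
  ultimately have inj: "inj_on (\<lambda>n. \<alpha> ^ n) {..<T}" by (intro eq_card_imp_inj_on) auto
  assume "\<alpha> ^ a = \<alpha> ^ b"
  then have "\<alpha> ^ (a mod T) = \<alpha> ^ (b mod T)" by (simp only: alpha_power_mod_T)
  moreover have "a mod T \<in> {..<T}" "b mod T \<in> {..<T}" using T_ge_2 by auto
  ultimately show "a mod T = b mod T" using inj_onD[OF inj] by blast
qed (metis alpha_power_mod_T)

lemma alpha_power_half_T: "\<alpha> ^ (T div 2) = -1"
proof -
  define z where "z = \<alpha> ^ (T div 2)"
  have "T div 2 + T div 2 = T" using even_T by auto
  then have "z * z = 1" using power_T[OF alpha_nonzero] unfolding z_def by (simp flip: power_add)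
  then have "(z - 1) * (z + 1) = 0" by (simp add: algebra_simps)
  moreover have "z \<noteq> 1"
    using alpha_power_eq_iff[of "T div 2" 0] T_ge_2 unfolding z_def by simp
  ultimately show ?thesis unfolding z_def by (simp add: eq_neg_iff_add_eq_0)
qed

lemma alpha_power_power_half_T: "(\<alpha> ^ n) ^ (T div 2) = (-1) ^ n"
proof -
  have "(\<alpha> ^ n) ^ (T div 2) = (\<alpha> ^ (T div 2)) ^ n" by (simp flip: power_mult add: mult.commute)
  then show ?thesis by (simp only: alpha_power_half_T)
qed

lemma power_half_T_eq_pm_one: "y \<noteq> 0 \<Longrightarrow> y ^ (T div 2) = 1 \<or> y ^ (T div 2) = -1" for y :: 'a
  using discrete_log alpha_power_power_half_T by (metis neg_one_even_power neg_one_odd_power)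

lemma nonzero_nonsquare_iff: "nonzero_nonsquare y \<longleftrightarrow> y \<noteq> 0 \<and> y ^ (T div 2) = -1" for y :: 'a
proof (cases "y = 0")
  case False
  then obtain n where n: "\<alpha> ^ n = y" using discrete_log by blast
  have "(\<exists>x. x ^ 2 = y) \<longleftrightarrow> even n"
  proof
    assume "\<exists>x. x ^ 2 = y"
    then obtain x where x: "x ^ 2 = y" by blast
    then obtain a where "\<alpha> ^ a = x" using False discrete_log by fastforce
    then have "\<alpha> ^ (2 * a) = \<alpha> ^ n" using x n by (simp add: power_mult mult.commute)
    then have "(2 * a) mod T = n mod T" by (simp only: alpha_power_eq_iff)
    then show "even n" using even_T by (metis dvd_mod_iff dvd_triv_left)
  next
    assume "even n"
    then have "(\<alpha> ^ (n div 2)) ^ 2 = y" using n by (simp flip: power_mult)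
    then show "\<exists>x. x ^ 2 = y" by blast
  qed
  then have "nonzero_nonsquare y \<longleftrightarrow> odd n" using False by (simp add: nonzero_nonsquare_def)
  also have "\<dots> \<longleftrightarrow> (-1::'a) ^ n = -1" using minus_one_neq_one by (cases "even n") auto
  finally show ?thesis using alpha_power_power_half_T[of n] n False by simp
qed (simp add: nonzero_nonsquare_def)

definition slce_one :: "nat \<Rightarrow> bool" where
  "slce_one n \<longleftrightarrow> nonzero_nonsquare (\<alpha> ^ n + 1)"

definition residue_support :: "nat \<Rightarrow> nat \<Rightarrow> nat set" where
  "residue_support N j = {n. n < T \<and> n mod N = j \<and> slce_one n}"

lemma finite_residue_support: "finite (residue_support N j)"
  unfolding residue_support_def by auto

lemma geom_poly_power_dvd_slce_poly_iff:
  assumes "k > 0"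
  shows "geom_poly k ^ (2 ^ h) dvd slce_poly \<alpha> \<longleftrightarrow>
    geom_poly k ^ (2 ^ h) dvd (\<Sum>j<2 ^ h * k. monom (of_nat (card (residue_support (2 ^ h * k) j))) j)"
    (is "?G dvd _ \<longleftrightarrow> ?G dvd ?R")
proof -
  define N where "N = 2 ^ h * k"
  have "N > 0" using assms by (simp add: N_def)
  have slce_poly_eq: "slce_poly \<alpha> = (\<Sum>n<T. monom (of_bool (slce_one n)) n)"
    unfolding slce_poly_def slce_def slce_one_def T_def card_UNIV by (simp add: of_bool_def)
  have sum_eq: "(\<Sum>n | n < T \<and> n mod N = j. of_bool (slce_one n)) = (of_nat (card (residue_support N j)) :: bit)" for j
    by (simp add: residue_support_def Int_def conj_assoc)
  have "(\<Sum>j<N. monom (\<Sum>n | n < T \<and> n mod N = j. of_bool (slce_one n)) j)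
      = (\<Sum>j<N. monom (of_nat (card (residue_support N j)) :: bit) j)"
    using sum_eq by (intro sum.cong) auto
  then have "monom 1 N - 1 dvd slce_poly \<alpha> - (\<Sum>j<N. monom (of_nat (card (residue_support N j))) j)"
    using monom_minus_one_dvd_sum_minus_residue_sum[OF \<open>N > 0\<close>, where T = T and s = "\<lambda>n. of_bool (slce_one n) :: bit"]
    unfolding slce_poly_eq by argo
  then have "monom 1 N - 1 dvd slce_poly \<alpha> - ?R" by (simp only: N_def)
  then have "?G dvd slce_poly \<alpha> - ?R"
    using geom_poly_power_dvd_monom_minus_one[of k h] unfolding N_def by (rule dvd_trans[rotated])
  from dvd_add_right_iff[OF this, of ?R] show ?thesis by simp
qed

end

section \<open>Divisors of \<open>Q - 1\<close>\<close>

locale slce_field_sqrt = slce_field +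
  fixes Q f :: nat
  assumes Q_eq: "Q = p ^ f" and Q_square: "Q * Q = p ^ m"
begin

lemma odd_Q: "odd Q" using odd_p by (simp add: Q_eq)

lemma Q_ge_3: "Q \<ge> 3"
proof -
  have "Q * Q \<noteq> 0" "Q * Q \<noteq> 1" using card_ge_3 unfolding Q_square by linarith+
  then have "Q \<noteq> 0" "Q \<noteq> 1" by auto
  then show ?thesis using odd_Q by presburger
qed

lemma T_eq: "T = (Q - 1) * (Q + 1)"
proof -
  obtain R where "Q = Suc R" using Q_ge_3 by (cases Q) auto
  then show ?thesis using Q_square card_ge_3 unfolding T_def by (simp add: algebra_simps)
qed

lemma T_plus_one: "T + 1 = Q * Q"
  using Q_square card_ge_3 by (simp add: T_def)

lemma half_T_eq: "T div 2 = (Q - 1) * ((Q + 1) div 2)"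
proof -
  have "even (Q + 1)" using odd_Q by simp
  then obtain c where "Q + 1 = 2 * c" by blast
  then show ?thesis using T_eq by simp
qed

lemma add_power_Q: "(x + y :: 'a) ^ Q = x ^ Q + y ^ Q"
  unfolding Q_eq by (rule add_power_p_power)

lemma power_Q_power_half_T: "z \<noteq> 0 \<Longrightarrow> (z ^ Q) ^ (T div 2) = z ^ (T div 2)" for z :: 'a
proof -
  assume "z \<noteq> 0"
  have "(z ^ Q) ^ (T div 2) = (z ^ (T div 2)) ^ Q" by (simp only: power_mult[symmetric] mult.commute)
  then show ?thesis using power_half_T_eq_pm_one[OF \<open>z \<noteq> 0\<close>] odd_Q by auto
qed

lemma nonzero_nonsquare_power_Q: "nonzero_nonsquare (z ^ Q) \<longleftrightarrow> nonzero_nonsquare z" for z :: 'a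
  using power_Q_power_half_T[of z] Q_ge_3 by (cases "z = 0") (auto simp: nonzero_nonsquare_iff)

text \<open>The Frobenius \<open>x \<mapsto> x\<^sup>Q\<close>, read on exponents, fixes every residue class modulo a divisor
  of \<open>Q - 1\<close> and has no fixed points on the support of the sequence.\<close>
lemma even_card_residue_support_if_dvd_Q_minus_one:
  assumes "N dvd Q - 1"
  shows "even (card (residue_support N j))"
proof (rule even_card_if_involution_without_fixpoints[OF finite_residue_support])
  define L where "L n = (n * Q) mod T" for n
  have "N dvd T" using assms T_eq by simp
  have L_mod_N: "L n mod N = n mod N" for n
  proof -
    obtain r where "Q - 1 = N * r" using assms by blast
    then have "Q = N * r + 1" using Q_ge_3 by simp
    then have "n * Q = n + N * (n * r)" by (simp add: algebra_simps)
    then show ?thesis unfolding L_def using \<open>N dvd T\<close> by (simp add: mod_mod_cancel)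
  qed
  have slce_one_L: "slce_one (L n) \<longleftrightarrow> slce_one n" for n
  proof -
    have "\<alpha> ^ L n + 1 = (\<alpha> ^ n + 1) ^ Q" unfolding L_def alpha_power_mult_mod_T add_power_Q by simp
    then show ?thesis by (simp add: slce_one_def nonzero_nonsquare_power_Q)
  qed
  fix n assume n: "n \<in> residue_support N j"
  then show "L n \<in> residue_support N j"
    using slce_one_L L_mod_N T_ge_2 by (simp add: residue_support_def L_def)
  have "L (L n) = (n * (Q * Q)) mod T" unfolding L_def by (simp add: mod_mult_left_eq mult.assoc)
  also have "n * (Q * Q) = n + T * n" using Q_square card_ge_3 by (simp add: T_def algebra_simps)
  finally show "L (L n) = n" using n by (simp add: residue_support_def)
  show "L n \<noteq> n"
  proof
    assume "L n = n"
    define z where "z = \<alpha> ^ n + 1"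
    have "z ^ Q = z"
      using \<open>L n = n\<close> alpha_power_mult_mod_T[of n Q] unfolding z_def L_def add_power_Q by simp
    moreover have "z \<noteq> 0" "z ^ (T div 2) = -1"
      using n unfolding residue_support_def slce_one_def z_def nonzero_nonsquare_iff by auto
    moreover have "z ^ Q = z * z ^ (Q - 1)" using Q_ge_3 by (simp flip: power_Suc)
    ultimately have "z ^ (Q - 1) = 1" by simp
    then have "z ^ (T div 2) = 1" unfolding half_T_eq by (simp add: power_mult)
    then show False using \<open>z ^ (T div 2) = -1\<close> minus_one_neq_one by simp
  qed
qed

lemma geom_poly_power_dvd_slce_poly_if_dvd_Q_minus_one:
  assumes "k > 0" and "2 ^ h * k dvd Q - 1"
  shows "geom_poly k ^ (2 ^ h) dvd slce_poly \<alpha>"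
proof -
  have "(\<Sum>j<2 ^ h * k. monom (of_nat (card (residue_support (2 ^ h * k) j)) :: bit) j) = 0"
    using even_card_residue_support_if_dvd_Q_minus_one[OF assms(2)] by (simp add: of_nat_bit)
  then show ?thesis using geom_poly_power_dvd_slce_poly_iff[OF assms(1)] by simp
qed

end

section \<open>Divisors of \<open>Q + 1\<close>\<close>

locale slce_field_sqrt_dvd_plus_one = slce_field_sqrt +
  fixes N :: nat
  assumes N_pos: "N > 0" and even_N: "even N" and N_dvd_Q_plus_one: "N dvd Q + 1"
begin

text \<open>\<open>E \<equiv> -Q (mod T)\<close>, so on exponents of \<open>\<alpha>\<close> the map \<open>twist\<close> is \<open>x \<mapsto> x\<^bsup>-Q\<^esup>\<close>.  It preserves
  residues modulo \<open>N\<close>, and since \<open>x\<^bsup>-Q\<^esup> + 1 = x\<^bsup>-Q\<^esup> (x + 1)\<^sup>Q\<close> with \<open>\<chi>(\<alpha>\<^bsup>-Qn\<^esup>) = (-1)\<^sup>n\<close>, it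
  preserves the sequence on even \<open>n\<close> and complements it on odd \<open>n\<close>.\<close>
definition E :: nat where "E = T - Q"

definition twist :: "nat \<Rightarrow> nat" where "twist n = (n * E) mod T"

lemma E_plus_Q: "E + Q = T"
proof -
  have "3 * Q \<le> Q * Q" using Q_ge_3 by (intro mult_right_mono) auto
  then have "Q \<le> T" using T_plus_one by linarith
  then show ?thesis by (simp add: E_def)
qed

lemma E_square_mod_T: "(E * E) mod T = 1"
proof -
  have "T * (T + 1) + 1 = (E + Q) * (E + Q) + (E + Q + 1)" using E_plus_Q by (simp add: algebra_simps)
  moreover have "E + Q + 1 = Q * Q" using E_plus_Q T_plus_one by simp
  moreover have "(E + Q) * (E + Q) + Q * Q = E * E + T * (2 * Q)"
    using E_plus_Q[symmetric] by (simp add: algebra_simps)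
  ultimately have "E * E + T * (2 * Q) = 1 + T * (T + 1)" by simp
  then have "(E * E + T * (2 * Q)) mod T = (1 + T * (T + 1)) mod T" by simp
  then have "(E * E) mod T = 1 mod T" by (simp only: mod_mult_self2)
  then show ?thesis using T_ge_2 by simp
qed

lemma twist_less_T: "twist n < T" unfolding twist_def using T_ge_2 by simp

lemma twist_twist: "n < T \<Longrightarrow> twist (twist n) = n"
proof -
  assume "n < T"
  have "twist (twist n) = (n * ((E * E) mod T)) mod T"
    unfolding twist_def by (simp add: mod_mult_left_eq mod_mult_right_eq mult.assoc)
  then show ?thesis using E_square_mod_T \<open>n < T\<close> by simp
qed

lemma inj_on_twist: "inj_on twist {..<T}"
  by (rule inj_onI) (metis twist_twist lessThan_iff)

lemma N_dvd_T: "N dvd T" unfolding T_eq using N_dvd_Q_plus_one by (rule dvd_mult)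

lemma twist_mod_N: "twist n mod N = n mod N"
proof -
  obtain r where "Q + 1 = N * r" using N_dvd_Q_plus_one by blast
  moreover obtain s where "T = N * s" using N_dvd_T by blast
  ultimately have "E + N * r = 1 + N * s" using E_plus_Q by simp
  then have "(E + N * r) mod N = (1 + N * s) mod N" by simp
  then have "E mod N = 1 mod N" by (simp only: mod_mult_self2)
  have "twist n mod N = (n * (E mod N)) mod N"
    unfolding twist_def using N_dvd_T by (simp add: mod_mod_cancel mod_mult_right_eq)
  also have "\<dots> = n mod N" unfolding \<open>E mod N = 1 mod N\<close> by (simp add: mod_mult_right_eq)
  finally show ?thesis .
qed

lemma even_twist_iff: "even (twist n) \<longleftrightarrow> even n"
  using twist_mod_N[of n] dvd_mod_iff[OF even_N, of n] dvd_mod_iff[OF even_N, of "twist n"] by simp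

lemma power_E_mult_power_Q: "x \<noteq> 0 \<Longrightarrow> x ^ E * x ^ Q = 1" for x :: 'a
  using power_T[of x] by (simp add: E_plus_Q flip: power_add)

lemma slce_one_twist_iff:
  assumes "\<alpha> ^ n + 1 \<noteq> 0"
  shows "slce_one (twist n) \<longleftrightarrow> (-1) ^ n * (\<alpha> ^ n + 1) ^ (T div 2) = (-1::'a)"
proof -
  define x where "x = \<alpha> ^ n"
  define y where "y = x ^ E"
  have "x \<noteq> 0" using alpha_nonzero by (simp add: x_def)
  then have "y * x ^ Q = 1" using power_E_mult_power_Q by (simp add: y_def)
  then have "y \<noteq> 0" and y_plus_one: "y + 1 = y * (x + 1) ^ Q"
    unfolding add_power_Q by (auto simp: algebra_simps)
  have "y = \<alpha> ^ twist n" by (simp add: twist_def alpha_power_mult_mod_T y_def x_def)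
  then have "y ^ (T div 2) = (-1) ^ n"
    using alpha_power_power_half_T[of "twist n"] even_twist_iff[of n]
    by (cases "even n") (simp_all add: minus_one_power_iff)
  then have "(y + 1) ^ (T div 2) = (-1) ^ n * (x + 1) ^ (T div 2)"
    using power_Q_power_half_T[of "x + 1"] assms
    unfolding y_plus_one by (simp add: x_def power_mult_distrib)
  moreover have "y + 1 \<noteq> 0" using y_plus_one \<open>y \<noteq> 0\<close> assms by (simp add: x_def)
  ultimately show ?thesis
    using \<open>y = \<alpha> ^ twist n\<close> by (simp add: slce_one_def nonzero_nonsquare_iff x_def)
qed

lemma slce_one_twist_even:
  assumes "even n"
  shows "slce_one (twist n) \<longleftrightarrow> slce_one n"
proof (cases "\<alpha> ^ n + 1 = 0")
  case True
  define x where "x = \<alpha> ^ n"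
  have "x \<noteq> 0" using alpha_nonzero by (simp add: x_def)
  then have "x ^ E + 1 = x ^ E * (x + 1) ^ Q"
    using power_E_mult_power_Q unfolding add_power_Q by (simp add: algebra_simps)
  then have "\<alpha> ^ twist n + 1 = 0"
    using True Q_ge_3 by (simp add: x_def twist_def alpha_power_mult_mod_T)
  then show ?thesis using True by (simp add: slce_one_def nonzero_nonsquare_def)
qed (use slce_one_twist_iff assms in \<open>simp add: slce_one_def nonzero_nonsquare_iff\<close>)

lemma slce_one_twist_odd:
  assumes "odd n" and "\<alpha> ^ n + 1 \<noteq> 0"
  shows "slce_one (twist n) \<longleftrightarrow> \<not> slce_one n"
  using slce_one_twist_iff[OF assms(2)] assms power_half_T_eq_pm_one[OF assms(2)] minus_one_neq_one
  by (auto simp: slce_one_def nonzero_nonsquare_iff minus_equation_iff)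

lemma power_Q_plus_one_multiple: "(\<alpha> ^ ((Q - 1) * t)) ^ (Q + 1) = 1"
proof -
  have "(\<alpha> ^ ((Q - 1) * t)) ^ (Q + 1) = (\<alpha> ^ T) ^ t"
    unfolding T_eq by (simp only: power_mult[symmetric] ac_simps)
  then show ?thesis by (simp add: power_T[OF alpha_nonzero])
qed

lemma twist_eq_iff:
  assumes "n < T"
  shows "twist n = n \<longleftrightarrow> (Q - 1) dvd n"
proof
  assume "twist n = n"
  define x where "x = \<alpha> ^ n"
  have "x \<noteq> 0" using alpha_nonzero by (simp add: x_def)
  have "x ^ E = x" using \<open>twist n = n\<close> alpha_power_mult_mod_T[of n E] by (simp add: twist_def x_def)
  then have "x * x ^ Q = 1" using power_E_mult_power_Q[OF \<open>x \<noteq> 0\<close>] by simp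
  then have "x ^ Suc Q = 1" by (simp only: power_Suc)
  then have "\<alpha> ^ (n * Suc Q) = \<alpha> ^ 0" unfolding x_def by (simp only: power_mult power_0)
  then have "T dvd n * Suc Q" by (simp only: alpha_power_eq_iff) (simp add: dvd_eq_mod_eq_0)
  then have "(Q - 1) * Suc Q dvd n * Suc Q" by (simp only: T_eq Suc_eq_plus1)
  then show "(Q - 1) dvd n" by (subst (asm) dvd_times_right_cancel_iff) simp_all
next
  assume "(Q - 1) dvd n"
  then obtain t where t: "n = (Q - 1) * t" by blast
  define x where "x = \<alpha> ^ n"
  have "x \<noteq> 0" using alpha_nonzero by (simp add: x_def)
  have "x * x ^ Q = 1" using power_Q_plus_one_multiple[of t] by (simp add: x_def t)
  then have "x ^ E * x ^ Q = x * x ^ Q" using power_E_mult_power_Q[OF \<open>x \<noteq> 0\<close>] by simp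
  then have "x ^ E = x" using \<open>x \<noteq> 0\<close> by simp
  then have "\<alpha> ^ twist n = \<alpha> ^ n" by (simp add: twist_def alpha_power_mult_mod_T x_def)
  then show "twist n = n" using twist_less_T[of n] assms by (simp add: alpha_power_eq_iff)
qed

lemma slce_one_multiple_iff:
  assumes "t < Q + 1"
  shows "slce_one ((Q - 1) * t) \<longleftrightarrow> t \<noteq> (Q + 1) div 2 \<and> odd t"
proof -
  define n where "n = (Q - 1) * t"
  define z where "z = \<alpha> ^ n + 1"
  have "Q - 1 > 0" using Q_ge_3 by simp
  have "n < T" unfolding n_def T_eq by (rule mult_strict_left_mono[OF assms \<open>Q - 1 > 0\<close>])
  have "z = 0 \<longleftrightarrow> \<alpha> ^ n = \<alpha> ^ (T div 2)" by (simp add: z_def alpha_power_half_T eq_neg_iff_add_eq_0)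
  also have "\<dots> \<longleftrightarrow> n = T div 2" using alpha_power_eq_iff \<open>n < T\<close> T_ge_2 by simp
  also have "\<dots> \<longleftrightarrow> t = (Q + 1) div 2" unfolding n_def half_T_eq using \<open>Q - 1 > 0\<close> by simp
  finally have z_eq_0_iff: "z = 0 \<longleftrightarrow> t = (Q + 1) div 2" .
  show ?thesis
  proof (cases "z = 0")
    case False
    have "(\<alpha> ^ n) ^ Suc Q = 1" using power_Q_plus_one_multiple[of t] by (simp add: n_def)
    then have "\<alpha> ^ n * (\<alpha> ^ n) ^ Q = 1" by (simp only: power_Suc)
    then have "z ^ Q * \<alpha> ^ n = z" unfolding z_def add_power_Q by (simp add: algebra_simps)
    moreover have "z ^ Q = z * z ^ (Q - 1)" using Q_ge_3 by (simp flip: power_Suc)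
    ultimately have "z ^ (Q - 1) * \<alpha> ^ n = 1" using False by (simp add: mult.assoc)
    then have "(z ^ (Q - 1) * \<alpha> ^ n) ^ ((Q + 1) div 2) = 1" by simp
    then have "z ^ (T div 2) * (\<alpha> ^ n) ^ ((Q + 1) div 2) = 1"
      unfolding half_T_eq by (simp add: power_mult power_mult_distrib)
    moreover have "(\<alpha> ^ n) ^ ((Q + 1) div 2) = (\<alpha> ^ (T div 2)) ^ t"
      unfolding n_def half_T_eq by (simp only: power_mult[symmetric] ac_simps)
    ultimately have "z ^ (T div 2) * (-1) ^ t * (-1) ^ t = (-1) ^ t" by (simp add: alpha_power_half_T)
    then have "z ^ (T div 2) = (-1) ^ t"
      by (simp add: mult.assoc power_add[symmetric] flip: power_mult_distrib)
    then have "slce_one n \<longleftrightarrow> (-1::'a) ^ t = -1"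
      using False by (simp add: slce_one_def nonzero_nonsquare_iff z_def)
    also have "\<dots> \<longleftrightarrow> odd t" using minus_one_neq_one by (cases "even t") auto
    finally show ?thesis using False z_eq_0_iff by (simp add: n_def)
  qed (use z_eq_0_iff in \<open>simp add: slce_one_def nonzero_nonsquare_def z_def n_def\<close>)
qed

lemma multiple_mod_N_iff:
  assumes "j < N"
  shows "((Q - 1) * t) mod N = j \<longleftrightarrow> N dvd 2 * t + j"
proof -
  define a where "a = (Q - 1) * t"
  have "a + 2 * t = (Q + 1) * t" unfolding a_def using Q_ge_3 by (simp add: algebra_simps)
  moreover have "N dvd (Q + 1) * t" using N_dvd_Q_plus_one by (rule dvd_mult2)
  ultimately have a0: "(a + 2 * t) mod N = 0" by (simp only: dvd_eq_mod_eq_0)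
  show ?thesis
  proof
    assume "((Q - 1) * t) mod N = j"
    then have "(2 * t + j) mod N = (2 * t + a mod N) mod N" by (simp add: a_def)
    also have "\<dots> = (a mod N + 2 * t) mod N" by (simp only: add.commute)
    also have "\<dots> = (a + 2 * t) mod N" by (rule mod_add_left_eq)
    finally have "(2 * t + j) mod N = (a + 2 * t) mod N" .
    then show "N dvd 2 * t + j" using a0 by (simp add: dvd_eq_mod_eq_0)
  next
    assume "N dvd 2 * t + j"
    then obtain r where "2 * t + j = N * r" by blast
    have "a mod N = (a + N * r) mod N" by simp
    also have "a + N * r = (a + 2 * t) + j" using \<open>2 * t + j = N * r\<close> by linarith
    also have "((a + 2 * t) + j) mod N = ((a + 2 * t) mod N + j) mod N" by (rule mod_add_left_eq[symmetric])
    also have "\<dots> = j" using a0 assms by simp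
    finally show "((Q - 1) * t) mod N = j" by (simp add: a_def)
  qed
qed

lemma card_residue_support_even:
  assumes "j < N" and "even j"
  shows "even (card (residue_support N j)) \<longleftrightarrow> even (card (twisted_fixpoints (Q + 1) N j))"
proof -
  have "even (card (residue_support N j)) \<longleftrightarrow> even (card {n \<in> residue_support N j. twist n = n})"
  proof (rule even_card_iff_even_card_fixpoints[OF finite_residue_support])
    fix n assume "n \<in> residue_support N j"
    then have n: "n < T" "n mod N = j" "slce_one n" by (auto simp: residue_support_def)
    then have "even n" using assms(2) dvd_mod_iff[OF even_N, of n] by simp
    then show "twist n \<in> residue_support N j"
      using twist_less_T twist_mod_N[of n] slce_one_twist_even[of n] n by (simp add: residue_support_def)
    show "twist (twist n) = n" using twist_twist n(1) by simp
  qed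
  moreover have "{n \<in> residue_support N j. twist n = n} = (\<lambda>t. (Q - 1) * t) ` twisted_fixpoints (Q + 1) N j"
  proof (intro equalityI subsetI)
    fix n assume "n \<in> {n \<in> residue_support N j. twist n = n}"
    then have n: "n < T" "n mod N = j" "slce_one n" "twist n = n" by (auto simp: residue_support_def)
    then obtain t where t: "n = (Q - 1) * t" using twist_eq_iff by blast
    then have "(Q - 1) * t < (Q - 1) * (Q + 1)" using n(1) T_eq by simp
    then have "t < Q + 1" by (simp only: mult_less_cancel1)
    moreover have "N dvd 2 * t + j" using multiple_mod_N_iff[OF assms(1)] n(2) t by simp
    moreover have "t \<noteq> (Q + 1) div 2 \<and> odd t" using slce_one_multiple_iff[OF \<open>t < Q + 1\<close>] n(3) t by simp
    ultimately show "n \<in> (\<lambda>t. (Q - 1) * t) ` twisted_fixpoints (Q + 1) N j"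
      using t unfolding twisted_fixpoints_def by auto
  next
    fix n assume "n \<in> (\<lambda>t. (Q - 1) * t) ` twisted_fixpoints (Q + 1) N j"
    then obtain t where t: "n = (Q - 1) * t" "t < Q + 1" "N dvd 2 * t + j" "t \<noteq> (Q + 1) div 2" "odd t"
      by (auto simp: twisted_fixpoints_def)
    have "n < T" unfolding t(1) T_eq using t(2) Q_ge_3 by (intro mult_strict_left_mono) auto
    moreover have "n mod N = j" using multiple_mod_N_iff[OF assms(1)] t by simp
    moreover have "slce_one n" using slce_one_multiple_iff[OF t(2)] t by simp
    moreover have "twist n = n" using twist_eq_iff[OF \<open>n < T\<close>] t(1) by simp
    ultimately show "n \<in> {n \<in> residue_support N j. twist n = n}" by (simp add: residue_support_def)
  qed
  moreover have "inj (\<lambda>t. (Q - 1) * t)" using Q_ge_3 by (intro injI) simp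
  ultimately show ?thesis by (simp add: card_image inj_on_subset)
qed

lemma card_residue_class_eq:
  assumes "j < N" and "j' < N"
  shows "card {n. n < T \<and> n mod N = j} = card {n. n < T \<and> n mod N = j'}"
proof -
  have le: "card {n. n < T \<and> n mod N = i} \<le> card {n. n < T \<and> n mod N = i'}" if "i < N" "i' < N" for i i'
  proof (rule card_inj_on_le)
    let ?shift = "\<lambda>n. (n + (N + i' - i)) mod T"
    show "inj_on ?shift {n. n < T \<and> n mod N = i}" by (rule inj_on_add_mod) auto
    show "?shift ` {n. n < T \<and> n mod N = i} \<subseteq> {n. n < T \<and> n mod N = i'}"
    proof
      fix x assume "x \<in> ?shift ` {n. n < T \<and> n mod N = i}"
      then obtain n where n: "n mod N = i" "x = ?shift n" by blast
      have "n + (N + i' - i) = (n div N) * N + (i' + N)"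
        using n(1) that div_mult_mod_eq[of n N] by linarith
      then have "(n + (N + i' - i)) mod N = i'" using that by simp
      then have "x mod N = i'" using n(2) N_dvd_T by (simp add: mod_mod_cancel)
      then show "x \<in> {n. n < T \<and> n mod N = i'}" using n(2) T_ge_2 by simp
    qed
    show "finite {n. n < T \<and> n mod N = i'}" by (rule finite_subset[of _ "{..<T}"]) auto
  qed
  show ?thesis using le[OF assms] le[OF assms(2,1)] by (rule antisym)
qed

lemma card_residue_support_odd:
  assumes "j < N" and "odd j"
  shows "card (residue_support N j) = card (residue_support N 1)"
proof -
  have halves: "2 * card (residue_support N i) = card {n. n < T \<and> n mod N = i}" if "i < N" "odd i" for i
  proof -
    define B where "B = {n. n < T \<and> n mod N = i \<and> \<not> slce_one n}"
    have admissible: "odd n \<and> \<alpha> ^ n + 1 \<noteq> 0" if "n < T" "n mod N = i" for n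
    proof
      show "odd n" using that \<open>odd i\<close> dvd_mod_iff[OF even_N, of n] by simp
      have "even (Q - 1)" using odd_Q Q_ge_3 by simp
      then obtain c where "Q - 1 = 2 * c" by blast
      then have "T div 2 = c * (Q + 1)" using T_eq by simp
      then have "N dvd T div 2" using dvd_mult[OF N_dvd_Q_plus_one, of c] by simp
      show "\<alpha> ^ n + 1 \<noteq> 0"
      proof
        assume "\<alpha> ^ n + 1 = 0"
        then have "\<alpha> ^ n = \<alpha> ^ (T div 2)" unfolding alpha_power_half_T by (simp add: eq_neg_iff_add_eq_0)
        then have "n = T div 2" using that(1) T_ge_2 by (simp add: alpha_power_eq_iff)
        then show False using \<open>N dvd T div 2\<close> that(2) \<open>odd i\<close> by auto
      qed
    qed
    have "card (residue_support N i) = card B"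
    proof (rule card_bij_eq[where f = twist and g = twist])
      show "inj_on twist (residue_support N i)" "inj_on twist B"
        by (auto intro: inj_on_subset[OF inj_on_twist] simp: residue_support_def B_def)
      show "twist ` residue_support N i \<subseteq> B" "twist ` B \<subseteq> residue_support N i"
        using admissible slce_one_twist_odd twist_less_T twist_mod_N
        by (auto simp: residue_support_def B_def)
    qed (auto simp: finite_residue_support B_def)
    moreover have "{n. n < T \<and> n mod N = i} = residue_support N i \<union> B"
      "residue_support N i \<inter> B = {}" by (auto simp: residue_support_def B_def)
    ultimately show ?thesis using finite_residue_support[of N i]
      by (simp add: card_Un_disjoint B_def)
  qed
  have "1 < N" using N_pos even_N by (cases "N = 1") auto
  then show ?thesis
    using halves[OF assms] halves[of 1] card_residue_class_eq[OF assms(1), of 1] by simp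
qed

lemma geom_poly_power_dvd_slce_poly_iff_Q_mod_4:
  assumes "N = 2 ^ h * k" and "odd k" and "k > 1" and "h \<ge> 1"
  shows "geom_poly k ^ (2 ^ h) dvd slce_poly \<alpha> \<longleftrightarrow> Q mod 4 = 3"
proof -
  define c where "c j = (of_nat (card (residue_support N j)) :: bit)" for j
  have dvd_iff: "geom_poly k ^ (2 ^ h) dvd slce_poly \<alpha> \<longleftrightarrow>
      geom_poly k ^ (2 ^ h) dvd (\<Sum>j<2 ^ h * k. monom (c j) j)"
    using geom_poly_power_dvd_slce_poly_iff[of k h] assms by (simp add: c_def)
  show ?thesis
  proof (cases "Q mod 4 = 3")
    case True
    then have "4 dvd Q + 1" by presburger
    have "c j = (if even j then 0 else c 1)" if "j < 2 ^ h * k" for j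
    proof (cases "even j")
      case True
      then have "even (card (residue_support N j))"
        using card_residue_support_even[of j] even_card_twisted_fixpoints[OF \<open>4 dvd Q + 1\<close> N_dvd_Q_plus_one]
          that assms(1) by simp
      then show ?thesis using True by (simp add: c_def of_nat_bit)
    next
      case False
      then show ?thesis using card_residue_support_odd[of j] that assms(1) by (simp add: c_def)
    qed
    then have "geom_poly k ^ (2 ^ h) dvd (\<Sum>j<2 ^ h * k. monom (c j) j)"
      by (rule geom_poly_power_dvd_alternating_sum[OF assms(4)])
    then show ?thesis using dvd_iff True by blast
  next
    case False
    then have "(Q + 1) mod 4 = 2" using odd_Q by presburger
    have "h = 1"
    proof (rule ccontr)
      assume "h \<noteq> 1"
      then have "(2::nat) ^ 2 dvd 2 ^ h" using assms(4) by (intro le_imp_power_dvd) simp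
      then have "4 dvd N" unfolding assms(1) by (simp add: dvd_mult2)
      then have "4 dvd Q + 1" using N_dvd_Q_plus_one by (rule dvd_trans)
      then show False using \<open>(Q + 1) mod 4 = 2\<close> by simp
    qed
    then have "N = 2 * k" using assms(1) by simp
    have "even (card (twisted_fixpoints (Q + 1) N 0)) \<longleftrightarrow> odd (card (twisted_fixpoints (Q + 1) N 2))"
      using twisted_fixpoints_0_2_parity[OF \<open>(Q + 1) mod 4 = 2\<close> _ assms(2,3)] N_dvd_Q_plus_one
      by (simp add: \<open>N = 2 * k\<close>)
    moreover have "even (card (residue_support N 0)) \<longleftrightarrow> even (card (twisted_fixpoints (Q + 1) N 0))"
      using card_residue_support_even[of 0] N_pos by simp
    moreover have "even (card (residue_support N 2)) \<longleftrightarrow> even (card (twisted_fixpoints (Q + 1) N 2))"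
      using card_residue_support_even[of 2] assms(3) \<open>N = 2 * k\<close> by simp
    ultimately have "c 0 \<noteq> c 2" by (simp add: c_def of_nat_bit)
    then show ?thesis using dvd_iff False \<open>h = 1\<close> eq_0_2_if_geom_poly_square_dvd_sum_monom[OF assms(3)]
      by auto
  qed
qed

end

theorem mainTheorem10:
  fixes p m k h :: nat and \<alpha> :: "'a::{field,finite}"
  assumes "prime p" and "odd p" and "m \<ge> 1"
    and "card (UNIV :: 'a set) = p ^ m"
    and "primitive_element \<alpha>"
    and "odd k" and "k > 1" and "k dvd (card (UNIV :: 'a set) - 1)"
    and "h \<ge> 1"
    and "\<exists>v::nat. v > 0 \<and> 2 ^ h * k dvd p ^ v + 1"
  shows "\<exists>w'::nat. w' > 0 \<and>
           m = 2 * (LEAST v'. v' > 0 \<and> k dvd p ^ v' + 1) * w' \<and>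
           (p mod 4 = 1 \<longrightarrow>
              ((geom_poly k) ^ (2 ^ h) dvd slce_poly \<alpha> \<longleftrightarrow> even w')) \<and>
           (p mod 4 = 3 \<longrightarrow>
              ((geom_poly k) ^ (2 ^ h) dvd slce_poly \<alpha> \<longleftrightarrow>
                 even w' \<or> odd ((LEAST v'. v' > 0 \<and> k dvd p ^ v' + 1) * w')))"
proof -
  define u where "u = (LEAST v'. v' > 0 \<and> k dvd p ^ v' + 1)"
  obtain v where "v > 0" and "2 ^ h * k dvd p ^ v + 1" using assms(10) by blast
  then obtain w where "w > 0" and m_eq: "m = 2 * u * w"
    and even_w: "even w \<longrightarrow> 2 ^ h * k dvd p ^ (u * w) - 1"
    and odd_w: "odd w \<longrightarrow> 2 ^ h * k dvd p ^ (u * w) + 1"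
    using exponent_decomposition[OF assms(2,3,6,7) _ assms(9)] assms(4,8) unfolding u_def by auto
  have "2 * u * w = u * w + u * w" by simp
  then have "p ^ (u * w) * p ^ (u * w) = p ^ m" unfolding m_eq by (simp only: power_add)
  then interpret slce_field_sqrt \<alpha> p m "p ^ (u * w)" "u * w"
    using assms(1-5) by unfold_locales simp_all
  have "geom_poly k ^ (2 ^ h) dvd slce_poly \<alpha> \<longleftrightarrow> even w \<or> p ^ (u * w) mod 4 = 3"
  proof (cases "even w")
    case True
    then show ?thesis using geom_poly_power_dvd_slce_poly_if_dvd_Q_minus_one even_w assms(7) by simp
  next
    case False
    interpret slce_field_sqrt_dvd_plus_one \<alpha> p m "p ^ (u * w)" "u * w" "2 ^ h * k"
      using False odd_w assms(7,9) by unfold_locales auto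
    show ?thesis using geom_poly_power_dvd_slce_poly_iff_Q_mod_4 assms(6,7,9) False by simp
  qed
  moreover have "p ^ (u * w) mod 4 = 3 \<longleftrightarrow> p mod 4 = 3 \<and> odd (u * w)"
    using assms(2) by (rule power_mod_4_eq_3_iff)
  moreover have "p mod 4 = 1 \<or> p mod 4 = 3" using assms(2) by presburger
  ultimately show ?thesis using \<open>w > 0\<close> m_eq unfolding u_def[symmetric] by (intro exI[of _ w]) auto
qed

end
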